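(* Let $q\ge 2$ and $n\ge 2$. If there is an ordering of all words of $\mathbb{Z}_q^{n-1}$ in which consecutive words have Hamming distance $1$, starting with $(0,\ldots,0)$ and ending with $(1,\ldots,1)$, then a quasi-complementary Hamming metric Gray code of $q$-ary $n$-tuples exists. Likewise, if there is such an ordering of $\mathbb{Z}_q^{n-1}$ in which consecutive words have Lee distance $1$, starting with $(0,\ldots,0)$ and ending with $(1,\ldots,1)$, then a quasi-complementary Lee metric Gray code of $q$-ary $n$-tuples exists.
   Context: Hamming distance between two words is the number of coordinates in which they differ. Lee distance between $v,u\in\mathbb{Z}_q^n$ is $\sum_{i}\min\{|v_i-u_i|,q-|v_i-u_i|\}$ (entries regarded as integers in $\{0,\ldots,q-1\}$). A quasi-complementary Hamming (resp. Lee) metric Gray code of $q$-ary $n$-tuples is an ordering $G(0),\ldots,G(q^n-1)$ of all words of $\mathbb{Z}_q^n$ such that consecutive words $G(i),G(i+1)$ ($0\le i<q^n-1$) have Hamming (resp. Lee) distance $1$, and $G((i+q^{n-1})\bmod q^n)=G(i)+(1,1,\ldots,1)$ for all $i$, with addition in $\mathbb{Z}_q^n$. *)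

theory Defs
  imports Main
begin

text \<open>Words of Z_q^n are represented as lists of naturals of length n with entries < q.\<close>

definition words :: "nat \<Rightarrow> nat \<Rightarrow> nat list set" where
  "words q n = {w. length w = n \<and> (\<forall>x\<in>set w. x < q)}"

definition hamming_dist :: "nat list \<Rightarrow> nat list \<Rightarrow> nat" where
  "hamming_dist u v = card {i. i < length u \<and> u ! i \<noteq> v ! i}"

definition lee_dist :: "nat \<Rightarrow> nat list \<Rightarrow> nat list \<Rightarrow> nat" where
  "lee_dist q u v =
     (\<Sum>i<length u. min (nat \<bar>int (u ! i) - int (v ! i)\<bar>) (q - nat \<bar>int (u ! i) - int (v ! i)\<bar>))"

definition add_ones :: "nat \<Rightarrow> nat list \<Rightarrow> nat list" where
  "add_ones q w = map (\<lambda>x. (x + 1) mod q) w"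

definition is_ordering :: "nat \<Rightarrow> nat \<Rightarrow> (nat \<Rightarrow> nat list) \<Rightarrow> bool" where
  "is_ordering q n G \<longleftrightarrow> bij_betw G {..<q ^ n} (words q n)"

definition is_gray_ordering :: "(nat list \<Rightarrow> nat list \<Rightarrow> nat) \<Rightarrow> nat \<Rightarrow> nat \<Rightarrow> (nat \<Rightarrow> nat list) \<Rightarrow> bool" where
  "is_gray_ordering d q n G \<longleftrightarrow> is_ordering q n G \<and>
     (\<forall>i. i + 1 < q ^ n \<longrightarrow> d (G i) (G (i + 1)) = 1)"

definition quasi_complementary_gray :: "(nat list \<Rightarrow> nat list \<Rightarrow> nat) \<Rightarrow> nat \<Rightarrow> nat \<Rightarrow> (nat \<Rightarrow> nat list) \<Rightarrow> bool" where
  "quasi_complementary_gray d q n G \<longleftrightarrow> is_gray_ordering d q n G \<and>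
     (\<forall>i < q ^ n. G ((i + q ^ (n - 1)) mod q ^ n) = add_ones q (G i))"

end

theory Submission
  imports Defs
begin

text \<open>Let \<open>H\<close> be the given path from \<open>0\<dots>0\<close> to \<open>1\<dots>1\<close> through \<open>Z_q^m\<close>, \<open>m = n - 1\<close>,
  and put \<open>N = q^m\<close>. Stack \<open>q\<close> translates of it: \<open>G(k N + j) = (H(j) + k(1,\<dots>,1), k)\<close> for
  \<open>k < q\<close>, \<open>j < N\<close>. Both metrics are invariant under translation and under appending a common
  letter, so inside a block consecutive words are at distance 1 because those of \<open>H\<close> are; at the
  junction of blocks \<open>k\<close> and \<open>k + 1\<close> the words are \<open>((k+1)\<dots>(k+1), k)\<close> and
  \<open>((k+1)\<dots>(k+1), k+1)\<close>. Adding \<open>(1,\<dots>,1)\<close> carries block \<open>k\<close> onto block \<open>k + 1 mod q\<close>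
  position by position, which is exactly the index shift by \<open>N\<close>.\<close>

definition shift_word :: "nat \<Rightarrow> nat \<Rightarrow> nat list \<Rightarrow> nat list" where
  "shift_word q k w = map (\<lambda>x. (x + k) mod q) w"

lemma mod_add_mod_complement:
  fixes x k q :: nat
  assumes "x < q"
  shows "((x + k) mod q + (q - k mod q)) mod q = x"
proof -
  have "((x + k) mod q + (q - k mod q)) mod q = (x + k + (q - k mod q)) mod q"
    by (simp add: mod_add_left_eq)
  also have "x + k + (q - k mod q) = x + (k div q + 1) * q"
    using assms mult_div_mod_eq[of q k] mod_less_divisor[of q k]
    by (simp add: algebra_simps, linarith)
  finally show ?thesis
    using assms by (metis mod_less mod_mult_self1)
qed

lemma inj_on_add_mod: "inj_on (\<lambda>x::nat. (x + k) mod q) {..<q}"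
  by (rule inj_onI) (metis lessThan_iff mod_add_mod_complement)

lemma shift_word_in_words: "0 < q \<Longrightarrow> w \<in> words q m \<Longrightarrow> shift_word q k w \<in> words q m"
  by (auto simp: shift_word_def words_def)

lemma shift_word_shift_word: "shift_word q k (shift_word q l w) = shift_word q (l + k) w"
  by (simp add: shift_word_def mod_add_left_eq add.assoc)

lemma shift_word_mod: "shift_word q (k mod q) w = shift_word q k w"
  by (simp add: shift_word_def mod_add_right_eq)

lemma shift_word_complement:
  "w \<in> words q m \<Longrightarrow> shift_word q (q - k mod q) (shift_word q k w) = w"
  by (auto simp: shift_word_def words_def mod_add_mod_complement intro!: map_idI)

lemma shift_word_self: "w \<in> words q m \<Longrightarrow> shift_word q q w = w"
  by (auto simp: shift_word_def words_def intro!: map_idI)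

lemma shift_word_replicate: "shift_word q k (replicate m a) = replicate m ((a + k) mod q)"
  by (simp add: shift_word_def)

lemma add_ones_shift_word: "add_ones q (shift_word q k w) = shift_word q (Suc k) w"
  by (simp add: add_ones_def shift_word_def mod_Suc_eq)

lemma snoc_in_words_iff: "u @ [c] \<in> words q (Suc m) \<longleftrightarrow> u \<in> words q m \<and> c < q"
  by (auto simp: words_def)

lemma bij_betw_div_mod:
  fixes N :: nat
  assumes "0 < N"
  shows "bij_betw (\<lambda>i. (i div N, i mod N)) {..<q * N} ({..<q} \<times> {..<N})"
proof (rule bij_betw_byWitness[where f' = "\<lambda>(k, j). k * N + j"])
  show "(\<lambda>i. (i div N, i mod N)) ` {..<q * N} \<subseteq> {..<q} \<times> {..<N}"
    using assms by (auto simp: div_less_iff_less_mult)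
  show "(\<lambda>(k, j). k * N + j) ` ({..<q} \<times> {..<N}) \<subseteq> {..<q * N}"
  proof clarsimp
    fix k j assume "k < q" "j < N"
    then have "k * N + j < Suc k * N" by simp
    also have "\<dots> \<le> q * N" using \<open>k < q\<close> by (intro mult_le_mono1) simp
    finally show "k * N + j < q * N" .
  qed
qed auto

lemma bij_betw_shift_word_snoc:
  assumes "0 < q"
  shows "bij_betw (\<lambda>(k, u). shift_word q k u @ [k]) ({..<q} \<times> words q m) (words q (Suc m))"
proof -
  have snoc_split: "w = butlast w @ [last w]" "butlast w \<in> words q m" "last w < q"
    if "w \<in> words q (Suc m)" for w
    using that by (cases w rule: rev_exhaust; simp add: words_def)+
  have "shift_word q (q - k) (shift_word q k u) = u" if "k < q" and "u \<in> words q m" for k u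
    using that shift_word_complement[of u q m k] by simp
  moreover have "shift_word q (last w) (shift_word q (q - last w) (butlast w)) @ [last w] = w"
    if "w \<in> words q (Suc m)" for w
    using snoc_split[OF that] by (simp add: shift_word_shift_word shift_word_self)
  ultimately show ?thesis
    using assms snoc_split
    by (intro bij_betw_byWitness[where f' = "\<lambda>w. (last w, shift_word q (q - last w) (butlast w))"])
      (auto simp: snoc_in_words_iff shift_word_in_words)
qed

lemma hamming_dist_snoc:
  assumes "length u = length v"
  shows "hamming_dist (u @ [a]) (v @ [b]) = hamming_dist u v + (if a = b then 0 else 1)"
proof -
  have "{i. i < length (u @ [a]) \<and> (u @ [a]) ! i \<noteq> (v @ [b]) ! i}
      = {i. i < length u \<and> u ! i \<noteq> v ! i} \<union> (if a = b then {} else {length u})"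
    using assms by (auto simp: nth_append less_Suc_eq)
  then show ?thesis
    by (simp add: hamming_dist_def)
qed

lemma hamming_dist_map:
  assumes "length u = length v" and "inj_on f (set u \<union> set v)"
  shows "hamming_dist (map f u) (map f v) = hamming_dist u v"
proof -
  have "f (u ! i) = f (v ! i) \<longleftrightarrow> u ! i = v ! i" if "i < length u" for i
    using assms that by (auto dest: inj_onD)
  then have "{i. i < length u \<and> map f u ! i \<noteq> map f v ! i} = {i. i < length u \<and> u ! i \<noteq> v ! i}"
    using assms(1) by auto
  then show ?thesis
    by (simp add: hamming_dist_def)
qed

lemma hamming_dist_shift_word:
  assumes "u \<in> words q m" and "v \<in> words q m"
  shows "hamming_dist (shift_word q k u) (shift_word q k v) = hamming_dist u v"
  unfolding shift_word_def
  using assms by (intro hamming_dist_map inj_on_subset[OF inj_on_add_mod]) (auto simp: words_def)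

lemma hamming_dist_self: "hamming_dist u u = 0"
  by (simp add: hamming_dist_def)

definition cyclic_dist :: "nat \<Rightarrow> nat \<Rightarrow> nat \<Rightarrow> nat" where
  "cyclic_dist q a b = min (nat \<bar>int a - int b\<bar>) (q - nat \<bar>int a - int b\<bar>)"

lemma lee_dist_cyclic_dist: "lee_dist q u v = (\<Sum>i<length u. cyclic_dist q (u ! i) (v ! i))"
  by (simp add: lee_dist_def cyclic_dist_def)

lemma lee_dist_snoc:
  "length u = length v \<Longrightarrow> lee_dist q (u @ [a]) (v @ [b]) = lee_dist q u v + cyclic_dist q a b"
  by (simp add: lee_dist_cyclic_dist nth_append)

lemma cyclic_dist_Suc_mod:
  "a < q \<Longrightarrow> b < q \<Longrightarrow> cyclic_dist q (Suc a mod q) (Suc b mod q) = cyclic_dist q a b"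
  by (auto simp: cyclic_dist_def mod_Suc)

lemma cyclic_dist_add_mod:
  "a < q \<Longrightarrow> b < q \<Longrightarrow> cyclic_dist q ((a + k) mod q) ((b + k) mod q) = cyclic_dist q a b"
proof (induction k)
  case (Suc k)
  then have "cyclic_dist q (Suc ((a + k) mod q) mod q) (Suc ((b + k) mod q) mod q)
      = cyclic_dist q ((a + k) mod q) ((b + k) mod q)"
    by (intro cyclic_dist_Suc_mod) auto
  with Suc show ?case
    by (simp add: mod_Suc_eq)
qed simp

lemma lee_dist_shift_word:
  assumes "u \<in> words q m" and "v \<in> words q m"
  shows "lee_dist q (shift_word q k u) (shift_word q k v) = lee_dist q u v"
  using assms
  by (auto simp: lee_dist_cyclic_dist shift_word_def words_def cyclic_dist_add_mod intro!: sum.cong)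

lemma lee_dist_self: "lee_dist q u u = 0"
  by (simp add: lee_dist_def)

lemma cyclic_dist_self: "cyclic_dist q a a = 0"
  by (simp add: cyclic_dist_def)

lemma cyclic_dist_Suc: "Suc a < q \<Longrightarrow> cyclic_dist q a (Suc a) = 1"
  by (simp add: cyclic_dist_def)

definition lift_ordering :: "nat \<Rightarrow> nat \<Rightarrow> (nat \<Rightarrow> nat list) \<Rightarrow> nat \<Rightarrow> nat list" where
  "lift_ordering q m H i = shift_word q (i div q ^ m) (H (i mod q ^ m)) @ [i div q ^ m]"

lemma lift_ordering_mult_add:
  assumes "j < q ^ m"
  shows "lift_ordering q m H (k * q ^ m + j) = shift_word q k (H j) @ [k]"
proof -
  have "0 < q ^ m"
    using assms by (cases "q ^ m") auto
  with assms show ?thesis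
    by (simp add: lift_ordering_def)
qed

lemma is_ordering_lift_ordering:
  assumes "0 < q" and "is_ordering q m H"
  shows "is_ordering q (Suc m) (lift_ordering q m H)"
proof -
  have "bij_betw (\<lambda>i. (i div q ^ m, i mod q ^ m)) {..<q ^ Suc m} ({..<q} \<times> {..<q ^ m})"
    using assms(1) bij_betw_div_mod[of "q ^ m" q] by simp
  moreover have "bij_betw (map_prod id H) ({..<q} \<times> {..<q ^ m}) ({..<q} \<times> words q m)"
    using assms(2) by (simp add: is_ordering_def bij_betw_map_prod)
  ultimately have "bij_betw (map_prod id H \<circ> (\<lambda>i. (i div q ^ m, i mod q ^ m)))
      {..<q ^ Suc m} ({..<q} \<times> words q m)"
    by (rule bij_betw_trans)
  then have "bij_betw ((\<lambda>(k, u). shift_word q k u @ [k]) \<circ> (map_prod id H \<circ> (\<lambda>i. (i div q ^ m, i mod q ^ m))))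
      {..<q ^ Suc m} (words q (Suc m))"
    using bij_betw_shift_word_snoc[OF assms(1)] by (rule bij_betw_trans)
  moreover have "(\<lambda>(k, u). shift_word q k u @ [k]) \<circ> (map_prod id H \<circ> (\<lambda>i. (i div q ^ m, i mod q ^ m)))
      = lift_ordering q m H"
    by (simp add: lift_ordering_def fun_eq_iff)
  ultimately show ?thesis
    by (simp add: is_ordering_def)
qed

lemma lift_ordering_add_period:
  assumes "0 < q"
  shows "lift_ordering q m H ((i + q ^ m) mod q ^ Suc m) = add_ones q (lift_ordering q m H i)"
proof -
  define N where "N = q ^ m"
  define k where "k = i div N"
  define j where "j = i mod N"
  have "0 < N" and "j < N"
    using assms by (simp_all add: N_def j_def)
  have "(i + q ^ m) mod q ^ Suc m = (i + N) mod (N * q)"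
    by (simp add: N_def mult.commute)
  also have "\<dots> = N * ((i + N) div N mod q) + (i + N) mod N"
    by (rule mod_mult2_eq)
  also have "\<dots> = Suc k mod q * N + j"
    using \<open>0 < N\<close> by (simp add: k_def j_def div_add_self2)
  finally have "lift_ordering q m H ((i + q ^ m) mod q ^ Suc m)
      = shift_word q (Suc k mod q) (H j) @ [Suc k mod q]"
    using \<open>j < N\<close> by (simp add: N_def lift_ordering_mult_add)
  \<comment> \<open>no separate case for the wrap-around \<open>k = q - 1\<close>: \<open>shift_word q k\<close> depends only on \<open>k mod q\<close>\<close>
  also have "\<dots> = add_ones q (shift_word q k (H j) @ [k])"
    by (simp add: shift_word_mod add_ones_shift_word[symmetric]) (simp add: add_ones_def)
  finally show ?thesis
    by (simp add: lift_ordering_def N_def k_def j_def)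
qed

lemma quasi_complementary_gray_lift_ordering:
  fixes d :: "nat list \<Rightarrow> nat list \<Rightarrow> nat"
  assumes "0 < q" and gray: "is_gray_ordering d q m H"
    and first: "H 0 = replicate m 0" and last: "H (q ^ m - 1) = replicate m 1"
    and shift: "\<And>k u v. u \<in> words q m \<Longrightarrow> v \<in> words q m \<Longrightarrow>
      d (shift_word q k u) (shift_word q k v) = d u v"
    and snoc: "\<And>c u v. u \<in> words q m \<Longrightarrow> v \<in> words q m \<Longrightarrow> d (u @ [c]) (v @ [c]) = d u v"
    and step: "\<And>c u. u \<in> words q m \<Longrightarrow> Suc c < q \<Longrightarrow> d (u @ [c]) (u @ [Suc c]) = 1"
  shows "quasi_complementary_gray d q (Suc m) (lift_ordering q m H)"
proof -
  define N where "N = q ^ m"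
  define G where "G = lift_ordering q m H"
  have H_words: "H j \<in> words q m" if "j < N" for j
    using gray that by (auto simp: is_gray_ordering_def is_ordering_def bij_betw_def N_def)
  have "d (G i) (G (Suc i)) = 1" if "Suc i < q * N" for i
  proof -
    define k where "k = i div N"
    define j where "j = i mod N"
    have i: "i = k * N + j"
      by (simp add: k_def j_def)
    have "0 < N" and "j < N"
      using \<open>0 < q\<close> by (simp_all add: N_def j_def)
    show ?thesis
    proof (cases "Suc j < N")
      case True
      then have "d (H j) (H (Suc j)) = 1"
        using gray by (auto simp: is_gray_ordering_def N_def)
      moreover have "G i = shift_word q k (H j) @ [k]"
        and "G (Suc i) = shift_word q k (H (Suc j)) @ [k]"
        using True \<open>j < N\<close> lift_ordering_mult_add[of "Suc j" q m H k]
        by (simp_all add: G_def i N_def lift_ordering_mult_add)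
      moreover have "H j \<in> words q m" and "H (Suc j) \<in> words q m"
        using H_words True \<open>j < N\<close> by simp_all
      ultimately show ?thesis
        using \<open>0 < q\<close> by (simp add: shift snoc shift_word_in_words)
    next
      case False
      then have "Suc i = Suc k * N" and "j = N - 1"
        using \<open>j < N\<close> i by simp_all
      then have "Suc k < q"
        using that by (metis mult_less_cancel2)
      have "G i = shift_word q k (H j) @ [k]"
        using \<open>j < N\<close> by (simp add: G_def i N_def lift_ordering_mult_add)
      also have "\<dots> = replicate m (Suc k) @ [k]"
        using \<open>Suc k < q\<close> unfolding \<open>j = N - 1\<close> N_def last by (simp add: shift_word_replicate)
      finally have "G i = replicate m (Suc k) @ [k]" .
      moreover have "G (Suc i) = replicate m (Suc k) @ [Suc k]"
        using \<open>Suc k < q\<close> \<open>Suc i = Suc k * N\<close> \<open>0 < N\<close>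
          lift_ordering_mult_add[of 0 q m H "Suc k"]
        by (simp add: G_def N_def first shift_word_replicate)
      ultimately show ?thesis
        using \<open>Suc k < q\<close> by (simp add: step words_def)
    qed
  qed
  moreover have "is_ordering q (Suc m) G"
    using gray \<open>0 < q\<close> by (simp add: G_def is_gray_ordering_def is_ordering_lift_ordering)
  moreover have "G ((i + q ^ (Suc m - 1)) mod q ^ Suc m) = add_ones q (G i)" for i
    using \<open>0 < q\<close> by (simp add: G_def lift_ordering_add_period del: power_Suc)
  ultimately show ?thesis
    by (simp add: quasi_complementary_gray_def is_gray_ordering_def G_def N_def)
qed

theorem lemma2:
  fixes q n :: nat
  assumes "q \<ge> 2" and "n \<ge> 2"
  shows "((\<exists>H. is_gray_ordering hamming_dist q (n - 1) H \<and>
            H 0 = replicate (n - 1) 0 \<and> H (q ^ (n - 1) - 1) = replicate (n - 1) 1)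
          \<longrightarrow> (\<exists>G. quasi_complementary_gray hamming_dist q n G))
       \<and> ((\<exists>H. is_gray_ordering (lee_dist q) q (n - 1) H \<and>
            H 0 = replicate (n - 1) 0 \<and> H (q ^ (n - 1) - 1) = replicate (n - 1) 1)
          \<longrightarrow> (\<exists>G. quasi_complementary_gray (lee_dist q) q n G))"
proof -
  obtain m where n: "n = Suc m"
    using assms(2) by (cases n) auto
  have "0 < q"
    using assms(1) by simp
  have length_words: "length u = m" if "u \<in> words q m" for u
    using that by (simp add: words_def)
  show ?thesis
    unfolding n diff_Suc_1
  proof (intro conjI impI; elim exE conjE)
    fix H assume "is_gray_ordering hamming_dist q m H"
      and "H 0 = replicate m 0" and "H (q ^ m - 1) = replicate m 1"
    then have "quasi_complementary_gray hamming_dist q (Suc m) (lift_ordering q m H)"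
      using \<open>0 < q\<close> length_words
      by (intro quasi_complementary_gray_lift_ordering)
        (simp_all add: hamming_dist_shift_word hamming_dist_snoc hamming_dist_self)
    then show "\<exists>G. quasi_complementary_gray hamming_dist q (Suc m) G" by blast
  next
    fix H assume "is_gray_ordering (lee_dist q) q m H"
      and "H 0 = replicate m 0" and "H (q ^ m - 1) = replicate m 1"
    then have "quasi_complementary_gray (lee_dist q) q (Suc m) (lift_ordering q m H)"
      using \<open>0 < q\<close> length_words
      by (intro quasi_complementary_gray_lift_ordering)
        (simp_all add: lee_dist_shift_word lee_dist_snoc lee_dist_self
          cyclic_dist_self cyclic_dist_Suc)
    then show "\<exists>G. quasi_complementary_gray (lee_dist q) q (Suc m) G" by blast
  qed
qed

end
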